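(* Let $n\ge 2$. The Haj\'os number of the symmetric cycle $D(C_{2^n+1})$ of order $2^n+1$ is at most $$\frac{n\left(2^{n+2}+n+5\right)}{2}-7.$$ Moreover, for every integer $m$ with $2^{n-1}+1<2m+1<2^n+1$, the Haj\'os number of the symmetric cycle $D(C_{2m+1})$ of order $2m+1$ is at most $$\frac{n\left(2^{n+2}+n+5\right)}{2}-5.$$
   Context: Digraphs are finite, without loops or multiple arcs. For a graph $G$, $D(G)$ is the symmetric digraph obtained by replacing each edge by a pair of opposite arcs; $D(K_3)$ is the complete symmetric digraph on 3 vertices and $D(C_k)$ the symmetric cycle of order $k$. The dichromatic number of a digraph is the minimum number of colors in a vertex coloring with no monochromatic directed cycle; odd symmetric cycles have dichromatic number 3. The directed Haj\'os operations are: (1) identifying a nonempty independent set $I$ of vertices: delete $I$, add a new vertex $v$, and add all arcs from $v$ to $\bigcup_{u\in I}N^+(u)$ and from $\bigcup_{u\in I}N^-(u)$ to $v$; (2) the directed Haj\'os join $(D_1,u_1,v_1)\triangledown(D_2,v_2,u_2)$ of disjoint digraphs $D_1,D_2$ with $u_1v_1\in A(D_1)$, $v_2u_2\in A(D_2)$: take the disjoint union, delete the arcs $u_1v_1$ and $v_2u_2$, identify $v_1$ and $v_2$ into a single vertex, and add the arc $u_1u_2$. The Haj\'os number of an $r$-dichromatic digraph $H$ is the minimum number of directed Haj\'os operations needed to obtain $H$ (up to isomorphism) from copies of the complete symmetric digraph $D(K_r)$, operations being applied to copies of $D(K_r)$ and to previously obtained digraphs. *)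

theory Defs
  imports Complex_Main
begin

text \<open>A digraph is a pair (vertex set, arc set) over the infinite vertex type nat,
  so that fresh vertices and disjoint copies are always available.\<close>
type_synonym digraph = "nat set \<times> (nat \<times> nat) set"

definition verts :: "digraph \<Rightarrow> nat set" where "verts G = fst G"
definition arcs :: "digraph \<Rightarrow> (nat \<times> nat) set" where "arcs G = snd G"

definition is_digraph :: "digraph \<Rightarrow> bool" where
  "is_digraph G \<longleftrightarrow> finite (verts G) \<and> arcs G \<subseteq> verts G \<times> verts G
     \<and> (\<forall>x. (x, x) \<notin> arcs G)"

definition digraph_iso :: "digraph \<Rightarrow> digraph \<Rightarrow> bool" where
  "digraph_iso G H \<longleftrightarrow> (\<exists>f. bij_betw f (verts G) (verts H) \<and>
     (\<forall>x\<in>verts G. \<forall>y\<in>verts G. (x, y) \<in> arcs G \<longleftrightarrow> (f x, f y) \<in> arcs H))"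

definition DK :: "nat \<Rightarrow> digraph" where
  "DK r = ({0..<r}, {(i, j). i < r \<and> j < r \<and> i \<noteq> j})"

definition DC :: "nat \<Rightarrow> digraph" where
  "DC k = ({0..<k}, {(i, j). i < k \<and> j < k \<and> i \<noteq> j \<and>
                              (j = (i + 1) mod k \<or> i = (j + 1) mod k)})"

definition acyclic_coloring :: "digraph \<Rightarrow> nat \<Rightarrow> (nat \<Rightarrow> nat) \<Rightarrow> bool" where
  "acyclic_coloring G k c \<longleftrightarrow> (\<forall>x\<in>verts G. c x < k) \<and>
     (\<forall>i. acyclic (arcs G \<inter> ({x. c x = i} \<times> {x. c x = i})))"

definition dichromatic_number :: "digraph \<Rightarrow> nat" where
  "dichromatic_number G = (LEAST k. \<exists>c. acyclic_coloring G k c)"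

definition identify :: "digraph \<Rightarrow> nat set \<Rightarrow> nat \<Rightarrow> digraph" where
  "identify G I v = (let f = (\<lambda>x. if x \<in> I then v else x) in
     (f ` verts G, (\<lambda>(a, b). (f a, f b)) ` arcs G))"

definition identification_ok :: "digraph \<Rightarrow> nat set \<Rightarrow> nat \<Rightarrow> bool" where
  "identification_ok G I v \<longleftrightarrow> I \<noteq> {} \<and> I \<subseteq> verts G \<and>
     (\<forall>x\<in>I. \<forall>y\<in>I. (x, y) \<notin> arcs G) \<and> v \<notin> verts G - I"

definition hajos_join :: "digraph \<Rightarrow> nat \<Rightarrow> nat \<Rightarrow> digraph \<Rightarrow> nat \<Rightarrow> nat \<Rightarrow> nat \<Rightarrow> digraph" where
  "hajos_join G1 u1 v1 G2 v2 u2 w = (let f = (\<lambda>x. if x = v1 \<or> x = v2 then w else x) in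
     (f ` (verts G1 \<union> verts G2),
      ((\<lambda>(a, b). (f a, f b)) ` ((arcs G1 - {(u1, v1)}) \<union> (arcs G2 - {(v2, u2)})))
        \<union> {(u1, u2)}))"

definition join_ok :: "digraph \<Rightarrow> nat \<Rightarrow> nat \<Rightarrow> digraph \<Rightarrow> nat \<Rightarrow> nat \<Rightarrow> nat \<Rightarrow> bool" where
  "join_ok G1 u1 v1 G2 v2 u2 w \<longleftrightarrow> verts G1 \<inter> verts G2 = {} \<and>
     (u1, v1) \<in> arcs G1 \<and> (v2, u2) \<in> arcs G2 \<and> w \<notin> (verts G1 \<union> verts G2) - {v1, v2}"

definition available :: "nat \<Rightarrow> digraph set \<Rightarrow> digraph set" where
  "available r S = {G. is_digraph G \<and> (digraph_iso G (DK r) \<or> (\<exists>G'\<in>S. digraph_iso G G'))}"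

definition hajos_step :: "nat \<Rightarrow> digraph set \<Rightarrow> digraph \<Rightarrow> bool" where
  "hajos_step r S D \<longleftrightarrow>
     (\<exists>G\<in>available r S. \<exists>I v. identification_ok G I v \<and> D = identify G I v) \<or>
     (\<exists>G1\<in>available r S. \<exists>G2\<in>available r S. \<exists>u1 v1 v2 u2 w.
        join_ok G1 u1 v1 G2 v2 u2 w \<and> D = hajos_join G1 u1 v1 G2 v2 u2 w)"

definition hajos_construction :: "nat \<Rightarrow> digraph list \<Rightarrow> bool" where
  "hajos_construction r Ds \<longleftrightarrow>
     (\<forall>i < length Ds. hajos_step r (set (take i Ds)) (Ds ! i))"

definition hajos_number_r :: "nat \<Rightarrow> digraph \<Rightarrow> nat" where
  "hajos_number_r r H = (LEAST k.
      (k = 0 \<and> digraph_iso H (DK r)) \<or>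
      (\<exists>Ds. hajos_construction r Ds \<and> Ds \<noteq> [] \<and> length Ds = k \<and> digraph_iso (last Ds) H))"

definition hajos_number :: "digraph \<Rightarrow> nat" where
  "hajos_number H = hajos_number_r (dichromatic_number H) H"

end

(*
  Odd symmetric cycles are 3-dichromatic and D(C_3) = D(K_3), so only constructions of the
  cycles have to be counted. Let p = 2^n + 1 and N = 2 p - 1 = 2^(n+1) + 1, and call the arc
  (u, u + p mod N) the chord at u; two consecutive chords lead from u to u + 1. The Hajos
  join of two copies of D(C_p) is D(C_N) with the arc (0, 1) replaced by the chords at 0 and p.
  Joining a chorded cycle with a rotated copy of a chorded cycle along one chord of each
  replaces the two chords by a cycle arc, and folding the rotated copy back onto the cycle
  costs at most N - 1 identifications. Merging the chorded cycle with chords at 0 and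
  2^j + 2^n with a rotated copy of itself leaves chords at 0 and 2^(j+1) + 2^n; after n such
  merges the second chord sits at N - 1, and two more merges remove all chords. Hence D(C_N)
  costs at most 1 + (n + 2) N operations more than D(C_p), which sums to the first bound.
  A shorter odd cycle is obtained from D(C_(2^n+1)) by folding the surplus path back and
  forth onto one arc, which takes two identifications.
*)
theory Submission
  imports Defs
begin

section \<open>Images of digraphs\<close>

lemma verts_pair [simp]: "verts (V, A) = V"
  by (simp add: verts_def)

lemma arcs_pair [simp]: "arcs (V, A) = A"
  by (simp add: arcs_def)

lemma is_digraphD:
  assumes "is_digraph G" "(a, b) \<in> arcs G"
  shows "a \<in> verts G" "b \<in> verts G" "a \<noteq> b"
  using assms unfolding is_digraph_def by auto

lemma mem_image_map_prod_iff:
  assumes "\<And>x. x \<in> A \<Longrightarrow> h (f x) = x" "X \<subseteq> A \<times> A"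
  shows "(a, b) \<in> map_prod f f ` X \<longleftrightarrow> (h a, h b) \<in> X \<and> f (h a) = a \<and> f (h b) = b"
proof
  assume "(a, b) \<in> map_prod f f ` X"
  then obtain x y where "(x, y) \<in> X" "a = f x" "b = f y"
    by auto
  then show "(h a, h b) \<in> X \<and> f (h a) = a \<and> f (h b) = b"
    using assms by auto
next
  assume "(h a, h b) \<in> X \<and> f (h a) = a \<and> f (h b) = b"
  then show "(a, b) \<in> map_prod f f ` X"
    by (metis map_prod_simp rev_image_eqI)
qed

definition image_digraph :: "(nat \<Rightarrow> nat) \<Rightarrow> digraph \<Rightarrow> digraph" where
  "image_digraph f G = (f ` verts G, map_prod f f ` arcs G)"

lemma verts_image_digraph [simp]: "verts (image_digraph f G) = f ` verts G"
  by (simp add: image_digraph_def)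

lemma arcs_image_digraph [simp]: "arcs (image_digraph f G) = map_prod f f ` arcs G"
  by (simp add: image_digraph_def)

lemma image_digraph_comp: "image_digraph f (image_digraph g G) = image_digraph (f \<circ> g) G"
  by (simp add: image_digraph_def image_comp map_prod.comp)

lemma image_digraph_cong:
  assumes "is_digraph G" "\<And>x. x \<in> verts G \<Longrightarrow> f x = g x"
  shows "image_digraph f G = image_digraph g G"
proof -
  have "map_prod f f e = map_prod g g e" if "e \<in> arcs G" for e
    using that assms is_digraphD[OF assms(1)] by (cases e) auto
  then show ?thesis
    unfolding image_digraph_def using assms(2) by (simp cong: image_cong)
qed

lemma identify_eq_image_digraph:
  "identify G I v = image_digraph (\<lambda>x. if x \<in> I then v else x) G"
  by (simp add: identify_def image_digraph_def map_prod_def)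

definition separates_arcs :: "(nat \<Rightarrow> nat) \<Rightarrow> digraph \<Rightarrow> bool" where
  "separates_arcs f G \<longleftrightarrow> (\<forall>(a, b) \<in> arcs G. f a \<noteq> f b)"

lemma separates_arcs_image_digraph:
  "separates_arcs f (image_digraph g G) \<longleftrightarrow> separates_arcs (f \<circ> g) G"
  by (auto simp: separates_arcs_def)

lemma separates_arcs_compD: "separates_arcs (f \<circ> g) G \<Longrightarrow> separates_arcs g G"
  unfolding separates_arcs_def by auto

lemma separates_arcs_if_inj_on:
  "is_digraph G \<Longrightarrow> inj_on f (verts G) \<Longrightarrow> separates_arcs f G"
  unfolding separates_arcs_def by (auto dest: is_digraphD inj_onD)

lemma is_digraph_image_digraph:
  assumes "is_digraph G" "separates_arcs f G"
  shows "is_digraph (image_digraph f G)"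
  using assms unfolding is_digraph_def separates_arcs_def by auto

lemma is_digraph_if_separates_arcs:
  assumes "finite (verts G)" "arcs G \<subseteq> verts G \<times> verts G" "separates_arcs f G"
  shows "is_digraph G"
  using assms unfolding is_digraph_def separates_arcs_def by fast

lemma separates_arcs_if_is_digraph_image:
  "is_digraph (image_digraph f G) \<Longrightarrow> separates_arcs f G"
  unfolding separates_arcs_def is_digraph_def by force

lemma digraph_iso_refl: "digraph_iso G G"
  unfolding digraph_iso_def by (rule exI[of _ id]) auto

lemma digraph_iso_sym:
  assumes "digraph_iso G H"
  shows "digraph_iso H G"
proof -
  obtain f where f: "bij_betw f (verts G) (verts H)"
    "\<forall>x\<in>verts G. \<forall>y\<in>verts G. (x, y) \<in> arcs G \<longleftrightarrow> (f x, f y) \<in> arcs H"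
    using assms unfolding digraph_iso_def by blast
  let ?g = "the_inv_into (verts G) f"
  have "bij_betw ?g (verts H) (verts G)"
    using f(1) by (rule bij_betw_the_inv_into)
  moreover have "f (?g x) = x" "?g x \<in> verts G" if "x \<in> verts H" for x
    using f(1) that by (auto simp: bij_betw_def f_the_inv_into_f the_inv_into_into)
  ultimately show ?thesis
    unfolding digraph_iso_def using f(2) by (intro exI[of _ ?g]) (auto simp: bij_betw_def)
qed

lemma digraph_iso_trans:
  assumes "digraph_iso G H" "digraph_iso H K"
  shows "digraph_iso G K"
proof -
  obtain f where f: "bij_betw f (verts G) (verts H)"
    "\<forall>x\<in>verts G. \<forall>y\<in>verts G. (x, y) \<in> arcs G \<longleftrightarrow> (f x, f y) \<in> arcs H"
    using assms(1) unfolding digraph_iso_def by blast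
  obtain g where g: "bij_betw g (verts H) (verts K)"
    "\<forall>x\<in>verts H. \<forall>y\<in>verts H. (x, y) \<in> arcs H \<longleftrightarrow> (g x, g y) \<in> arcs K"
    using assms(2) unfolding digraph_iso_def by blast
  have "f x \<in> verts H" if "x \<in> verts G" for x
    using f(1) that by (auto simp: bij_betw_def)
  then show ?thesis
    unfolding digraph_iso_def using bij_betw_trans[OF f(1) g(1)] f(2) g(2)
    by (intro exI[of _ "g \<circ> f"]) auto
qed

lemma digraph_iso_image_digraph:
  assumes "is_digraph G" "inj_on f (verts G)"
  shows "digraph_iso G (image_digraph f G)"
  unfolding digraph_iso_def
proof (intro exI[of _ f] conjI ballI)
  show "bij_betw f (verts G) (verts (image_digraph f G))"
    using assms(2) by (simp add: bij_betw_def)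
  fix x y assume "x \<in> verts G" "y \<in> verts G"
  show "(x, y) \<in> arcs G \<longleftrightarrow> (f x, f y) \<in> arcs (image_digraph f G)"
  proof
    assume "(f x, f y) \<in> arcs (image_digraph f G)"
    then obtain a b where "(a, b) \<in> arcs G" "f a = f x" "f b = f y"
      by auto
    with \<open>x \<in> verts G\<close> \<open>y \<in> verts G\<close> assms show "(x, y) \<in> arcs G"
      by (metis is_digraphD(1,2) inj_onD)
  qed auto
qed

section \<open>Counting Hajos operations\<close>

lemma is_digraph_if_available: "G \<in> available r S \<Longrightarrow> is_digraph G"
  unfolding available_def by blast

lemma available_mono: "G \<in> available r S \<Longrightarrow> S \<subseteq> S' \<Longrightarrow> G \<in> available r S'"
  unfolding available_def by blast

lemma available_if_mem: "is_digraph G \<Longrightarrow> G \<in> S \<Longrightarrow> G \<in> available r S"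
  unfolding available_def using digraph_iso_refl by blast

lemma available_if_iso:
  "G \<in> available r S \<Longrightarrow> is_digraph H \<Longrightarrow> digraph_iso H G \<Longrightarrow> H \<in> available r S"
  unfolding available_def using digraph_iso_trans by blast

lemma available_image_digraph:
  assumes "G \<in> available r S" "inj_on f (verts G)"
  shows "image_digraph f G \<in> available r S"
proof -
  have "is_digraph G"
    using assms(1) by (rule is_digraph_if_available)
  then show ?thesis
    using assms by (meson available_if_iso digraph_iso_image_digraph digraph_iso_sym
        is_digraph_image_digraph separates_arcs_if_inj_on)
qed

lemma hajos_construction_snoc:
  "hajos_construction r Ds \<Longrightarrow> hajos_step r (set Ds) D \<Longrightarrow> hajos_construction r (Ds @ [D])"
  unfolding hajos_construction_def by (auto simp: nth_append less_Suc_eq)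

lemma hajos_construction_take:
  "hajos_construction r Ds \<Longrightarrow> hajos_construction r (take k Ds)"
  unfolding hajos_construction_def by (simp add: min_less_iff_conj)

definition obtainable_within :: "nat \<Rightarrow> digraph list \<Rightarrow> nat \<Rightarrow> digraph \<Rightarrow> bool" where
  "obtainable_within r Ds k G \<longleftrightarrow>
     (\<exists>Es. hajos_construction r (Ds @ Es) \<and> length Es \<le> k \<and> G \<in> available r (set (Ds @ Es)))"

lemma obtainable_within_available:
  "hajos_construction r Ds \<Longrightarrow> G \<in> available r (set Ds) \<Longrightarrow> obtainable_within r Ds 0 G"
  unfolding obtainable_within_def by (intro exI[of _ "[]"]) simp

lemma obtainable_within_step:
  assumes "hajos_construction r Ds" "hajos_step r (set Ds) G" "is_digraph G"
  shows "obtainable_within r Ds 1 G"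
  unfolding obtainable_within_def
  using assms hajos_construction_snoc available_if_mem by (intro exI[of _ "[G]"]) auto

lemma obtainable_within_mono:
  "obtainable_within r Ds k G \<Longrightarrow> k \<le> l \<Longrightarrow> obtainable_within r Ds l G"
  unfolding obtainable_within_def by auto

lemma obtainable_within_bind:
  assumes "obtainable_within r Ds k G"
    and "\<And>Es. hajos_construction r (Ds @ Es) \<Longrightarrow> G \<in> available r (set (Ds @ Es)) \<Longrightarrow>
           obtainable_within r (Ds @ Es) l H"
  shows "obtainable_within r Ds (k + l) H"
proof -
  obtain Es where Es: "hajos_construction r (Ds @ Es)" "length Es \<le> k"
    "G \<in> available r (set (Ds @ Es))"
    using assms(1) unfolding obtainable_within_def by blast
  obtain Fs where "hajos_construction r (Ds @ Es @ Fs)" "length Fs \<le> l"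
    "H \<in> available r (set (Ds @ Es @ Fs))"
    using assms(2)[OF Es(1,3)] unfolding obtainable_within_def by auto
  then show ?thesis
    unfolding obtainable_within_def using Es(2) by (intro exI[of _ "Es @ Fs"]) auto
qed

definition collisions :: "(nat \<Rightarrow> nat) \<Rightarrow> nat set \<Rightarrow> nat set" where
  "collisions f V = {y. \<exists>x1\<in>V. \<exists>x2\<in>V. x1 \<noteq> x2 \<and> f x1 = y \<and> f x2 = y}"

lemma finite_collisions: "finite V \<Longrightarrow> finite (collisions f V)"
  by (rule finite_subset[of _ "f ` V"]) (auto simp: collisions_def)

lemma collisions_empty_iff: "collisions f V = {} \<longleftrightarrow> inj_on f V"
  unfolding collisions_def inj_on_def by auto

lemma collisions_mono: "V \<subseteq> W \<Longrightarrow> collisions f V \<subseteq> collisions f W"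
  unfolding collisions_def by blast

lemma collisions_Un_subset:
  assumes "inj_on f A" "inj_on f B"
  shows "collisions f (A \<union> B) \<subseteq> f ` A \<inter> f ` B"
proof
  fix y assume "y \<in> collisions f (A \<union> B)"
  then obtain x1 x2 where "x1 \<in> A \<union> B" "x2 \<in> A \<union> B" "x1 \<noteq> x2" "f x1 = y" "f x2 = y"
    unfolding collisions_def by blast
  with assms show "y \<in> f ` A \<inter> f ` B"
    by (metis IntI Un_iff image_eqI inj_onD)
qed

lemma card_collisions_le:
  assumes "finite A" "inj_on f A" "inj_on f B" "V \<subseteq> A \<union> B"
  shows "card (collisions f V) \<le> card (f ` A \<inter> f ` B)"
proof (rule card_mono)
  show "finite (f ` A \<inter> f ` B)"
    using assms(1) by simp
  show "collisions f V \<subseteq> f ` A \<inter> f ` B"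
    using collisions_mono[OF assms(4)] collisions_Un_subset[OF assms(2,3)] by blast
qed

lemma collisions_merge_fibre:
  assumes x: "x \<in> V" and g: "\<And>z. z \<in> V \<Longrightarrow> g z = (if f z = f x then x else z)"
  shows "collisions f (g ` V) = collisions f V - {f x}"
proof
  show "collisions f (g ` V) \<subseteq> collisions f V - {f x}"
  proof
    fix y assume "y \<in> collisions f (g ` V)"
    then obtain a b where ab: "a \<in> V" "b \<in> V" "g a \<noteq> g b" "f (g a) = y" "f (g b) = y"
      unfolding collisions_def by blast
    moreover from ab have "y \<noteq> f x"
      using g by (metis (full_types))
    moreover have "g a \<in> V" "g b \<in> V"
      using ab(1,2) g x by auto
    ultimately show "y \<in> collisions f V - {f x}"
      unfolding collisions_def by blast
  qed
  show "collisions f V - {f x} \<subseteq> collisions f (g ` V)"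
  proof
    fix y assume "y \<in> collisions f V - {f x}"
    then obtain a b where ab: "a \<in> V" "b \<in> V" "a \<noteq> b" "f a = y" "f b = y" "y \<noteq> f x"
      unfolding collisions_def by blast
    then have "a \<in> g ` V" "b \<in> g ` V"
      using g by (metis image_eqI)+
    with ab show "y \<in> collisions f (g ` V)"
      unfolding collisions_def by blast
  qed
qed

lemma identify_fibre:
  assumes G: "is_digraph G" and f: "separates_arcs f G" and x: "x \<in> verts G"
  defines "F \<equiv> {z \<in> verts G. f z = f x}"
  shows "identification_ok G F x"
    and "is_digraph (identify G F x)"
    and "separates_arcs f (identify G F x)"
    and "image_digraph f (identify G F x) = image_digraph f G"
    and "collisions f (verts (identify G F x)) = collisions f (verts G) - {f x}"
proof -
  define g where "g z = (if z \<in> F then x else z)" for z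
  have H: "identify G F x = image_digraph g G"
    unfolding identify_eq_image_digraph g_def ..
  have fg: "f (g z) = f z" if "z \<in> verts G" for z
    using that unfolding g_def F_def by simp
  have fg_sep: "separates_arcs (f \<circ> g) G"
    using f fg is_digraphD[OF G] unfolding separates_arcs_def by fastforce
  show "identification_ok G F x"
    using f x unfolding identification_ok_def F_def separates_arcs_def by auto
  show sep: "separates_arcs f (identify G F x)"
    unfolding H separates_arcs_image_digraph by (rule fg_sep)
  have "separates_arcs g G"
    using fg_sep unfolding separates_arcs_def by auto
  then show "is_digraph (identify G F x)"
    unfolding H by (rule is_digraph_image_digraph[OF G])
  show "image_digraph f (identify G F x) = image_digraph f G"
    unfolding H image_digraph_comp using G fg by (intro image_digraph_cong) auto
  have "g z = (if f z = f x then x else z)" if "z \<in> verts G" for z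
    using that unfolding g_def F_def by simp
  then show "collisions f (verts (identify G F x)) = collisions f (verts G) - {f x}"
    unfolding H verts_image_digraph by (rule collisions_merge_fibre[OF x])
qed

lemma obtainable_within_image_digraph:
  assumes "hajos_construction r Ds" "G \<in> available r (set Ds)" "separates_arcs f G"
  shows "obtainable_within r Ds (card (collisions f (verts G))) (image_digraph f G)"
  using assms
proof (induction "card (collisions f (verts G))" arbitrary: Ds G)
  case 0
  have G: "is_digraph G"
    using "0.prems"(2) by (rule is_digraph_if_available)
  then have "inj_on f (verts G)"
    using "0.hyps" finite_collisions collisions_empty_iff unfolding is_digraph_def by auto
  then show ?case
    using "0.hyps" "0.prems" available_image_digraph obtainable_within_available by simp
next
  case (Suc m)
  have G: "is_digraph G"
    using Suc.prems(2) by (rule is_digraph_if_available)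
  have "collisions f (verts G) \<noteq> {}"
    using Suc.hyps(2) by auto
  then obtain x where x: "x \<in> verts G" "f x \<in> collisions f (verts G)"
    unfolding collisions_def by blast
  define F where "F = {z \<in> verts G. f z = f x}"
  note fibre = identify_fibre[OF G Suc.prems(3) x(1), folded F_def]
  have "hajos_step r (set Ds) (identify G F x)"
    unfolding hajos_step_def using Suc.prems(2) fibre(1) by blast
  then have "obtainable_within r Ds 1 (identify G F x)"
    using Suc.prems(1) fibre(2) by (blast intro: obtainable_within_step)
  moreover have "m = card (collisions f (verts (identify G F x)))"
    using fibre(5) Suc.hyps(2) x(2) G finite_collisions unfolding is_digraph_def by auto
  ultimately have "obtainable_within r Ds (1 + m) (image_digraph f (identify G F x))"
    using Suc.hyps(1) fibre(3) by (blast intro: obtainable_within_bind)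
  then show ?case
    using Suc.hyps(2) fibre(4) by simp
qed

lemma hajos_join_eq_image_digraph:
  assumes "u1 \<noteq> v1" "u1 \<noteq> v2" "u2 \<noteq> v1" "u2 \<noteq> v2"
  shows "hajos_join G1 u1 v1 G2 v2 u2 w = image_digraph (\<lambda>x. if x = v1 \<or> x = v2 then w else x)
           (verts G1 \<union> verts G2, (arcs G1 - {(u1, v1)}) \<union> (arcs G2 - {(v2, u2)}) \<union> {(u1, u2)})"
  using assms by (auto simp: hajos_join_def image_digraph_def map_prod_def Let_def)

lemma obtainable_within_join:
  assumes cons: "hajos_construction r Ds"
    and G1: "G1 \<in> available r (set Ds)" and G2: "G2 \<in> available r (set Ds)"
    and disj: "verts G1 \<inter> verts G2 = {}"
    and a1: "(u1, v1) \<in> arcs G1" and a2: "(v2, u2) \<in> arcs G2"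
    and inj1: "inj_on \<phi> (verts G1)" and inj2: "inj_on \<phi> (verts G2)"
    and glue: "\<phi> v1 = \<phi> v2" and new_arc: "\<phi> u1 \<noteq> \<phi> u2"
  shows "obtainable_within r Ds (1 + card (\<phi> ` verts G1 \<inter> \<phi> ` (verts G2 - {v2})))
     (image_digraph \<phi>
       (verts G1 \<union> verts G2, (arcs G1 - {(u1, v1)}) \<union> (arcs G2 - {(v2, u2)}) \<union> {(u1, u2)}))"
    (is "obtainable_within r Ds _ (image_digraph \<phi> ?U)")
proof -
  have dG1: "is_digraph G1" and dG2: "is_digraph G2"
    using G1 G2 by (auto intro: is_digraph_if_available)
  have ends: "u1 \<in> verts G1" "v1 \<in> verts G1" "v2 \<in> verts G2" "u2 \<in> verts G2"
    using is_digraphD[OF dG1 a1] is_digraphD[OF dG2 a2] by auto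
  define \<iota> where "\<iota> x = (if x = v1 \<or> x = v2 then v1 else x)" for x
  define J where "J = hajos_join G1 u1 v1 G2 v2 u2 v1"
  have J: "J = image_digraph \<iota> ?U"
    unfolding J_def \<iota>_def using ends disj is_digraphD[OF dG1 a1] is_digraphD[OF dG2 a2]
    by (intro hajos_join_eq_image_digraph) auto
  have \<phi>\<iota>: "\<phi> \<circ> \<iota> = \<phi>"
    unfolding \<iota>_def using glue by auto
  have "separates_arcs \<phi> G1" "separates_arcs \<phi> G2"
    using dG1 dG2 inj1 inj2 by (auto intro: separates_arcs_if_inj_on)
  then have sep_U: "separates_arcs \<phi> ?U"
    using new_arc unfolding separates_arcs_def by auto
  have "is_digraph ?U"
    using dG1 dG2 ends sep_U by (intro is_digraph_if_separates_arcs) (auto simp: is_digraph_def)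
  moreover have "separates_arcs \<iota> ?U"
    using separates_arcs_compD[of \<phi> \<iota>] sep_U \<phi>\<iota> by simp
  ultimately have dJ: "is_digraph J"
    unfolding J by (rule is_digraph_image_digraph)
  have "join_ok G1 u1 v1 G2 v2 u2 v1"
    unfolding join_ok_def using disj a1 a2 by auto
  then have "hajos_step r (set Ds) J"
    unfolding hajos_step_def J_def using G1 G2 by blast
  then have step: "obtainable_within r Ds 1 J"
    by (rule obtainable_within_step[OF cons _ dJ])
  have sep_J: "separates_arcs \<phi> J"
    unfolding J separates_arcs_image_digraph \<phi>\<iota> by (rule sep_U)
  have "verts J \<subseteq> verts G1 \<union> (verts G2 - {v2})"
    unfolding J \<iota>_def using ends by auto
  then have card: "card (collisions \<phi> (verts J)) \<le> card (\<phi> ` verts G1 \<inter> \<phi> ` (verts G2 - {v2}))"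
    using dG1 inj1 inj_on_subset[OF inj2] unfolding is_digraph_def by (intro card_collisions_le) auto
  have "image_digraph \<phi> J = image_digraph \<phi> ?U"
    unfolding J image_digraph_comp \<phi>\<iota> ..
  moreover have "obtainable_within r Ds (1 + card (collisions \<phi> (verts J))) (image_digraph \<phi> J)"
    using step obtainable_within_image_digraph[OF _ _ sep_J] by (rule obtainable_within_bind)
  ultimately have "obtainable_within r Ds (1 + card (collisions \<phi> (verts J))) (image_digraph \<phi> ?U)"
    by simp
  then show ?thesis
    by (rule obtainable_within_mono) (use card in simp)
qed

text \<open>Disjoint copies cost nothing, since the available digraphs are closed under isomorphism.\<close>
lemma obtainable_within_join_images:
  assumes cons: "hajos_construction r Ds"
    and S1: "S1 \<in> available r (set Ds)" and S2: "S2 \<in> available r (set Ds)"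
    and inj1: "inj_on g1 (verts S1)" and inj2: "inj_on g2 (verts S2)"
    and a1: "(s, t) \<in> arcs S1" and a2: "(t', r') \<in> arcs S2"
    and glue: "g2 t' = g1 t" and new_arc: "g1 s \<noteq> g2 r'"
  shows "obtainable_within r Ds (1 + card (g1 ` verts S1 \<inter> g2 ` (verts S2 - {t'})))
     (g1 ` verts S1 \<union> g2 ` verts S2,
      map_prod g1 g1 ` (arcs S1 - {(s, t)}) \<union> map_prod g2 g2 ` (arcs S2 - {(t', r')})
        \<union> {(g1 s, g2 r')})"
proof -
  define e1 where "e1 x = 2 * x" for x :: nat
  define e2 where "e2 x = 2 * x + 1" for x :: nat
  define \<phi> where "\<phi> z = (if even z then g1 (z div 2) else g2 (z div 2))" for z
  have inj_e: "inj e1" "inj e2"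
    unfolding e1_def e2_def inj_def by auto
  have \<phi>e: "\<phi> (e1 x) = g1 x" "\<phi> (e2 x) = g2 x" for x
    unfolding \<phi>_def e1_def e2_def by auto
  have \<phi>e': "map_prod \<phi> \<phi> (map_prod e1 e1 x) = map_prod g1 g1 x"
    "map_prod \<phi> \<phi> (map_prod e2 e2 x) = map_prod g2 g2 x" for x
    using \<phi>e by (cases x; simp)+
  let ?G1 = "image_digraph e1 S1" and ?G2 = "image_digraph e2 S2"
  have "obtainable_within r Ds (1 + card (\<phi> ` verts ?G1 \<inter> \<phi> ` (verts ?G2 - {e2 t'})))
     (image_digraph \<phi> (verts ?G1 \<union> verts ?G2,
        (arcs ?G1 - {(e1 s, e1 t)}) \<union> (arcs ?G2 - {(e2 t', e2 r')}) \<union> {(e1 s, e2 r')}))"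
  proof (rule obtainable_within_join[OF cons])
    show "?G1 \<in> available r (set Ds)" "?G2 \<in> available r (set Ds)"
      using S1 S2 inj_e by (auto intro: available_image_digraph inj_on_subset)
    show "verts ?G1 \<inter> verts ?G2 = {}"
      unfolding e1_def e2_def by auto presburger
    show "(e1 s, e1 t) \<in> arcs ?G1" "(e2 t', e2 r') \<in> arcs ?G2"
      using a1 a2 by force+
    show "inj_on \<phi> (verts ?G1)" "inj_on \<phi> (verts ?G2)"
      using inj1 inj2 \<phi>e by (auto simp: inj_on_def)
    show "\<phi> (e1 t) = \<phi> (e2 t')" "\<phi> (e1 s) \<noteq> \<phi> (e2 r')"
      using glue new_arc \<phi>e by auto
  qed
  moreover have "verts ?G2 - {e2 t'} = e2 ` (verts S2 - {t'})"
    using inj_e by (simp add: image_set_diff)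
  moreover have "arcs ?G1 - {(e1 s, e1 t)} = map_prod e1 e1 ` (arcs S1 - {(s, t)})"
    "arcs ?G2 - {(e2 t', e2 r')} = map_prod e2 e2 ` (arcs S2 - {(t', r')})"
    using inj_e by (simp_all add: image_set_diff prod.inj_map)
  ultimately show ?thesis
    using \<phi>e \<phi>e' by (simp add: image_digraph_def image_Un image_comp comp_def)
qed

section \<open>Symmetric cycles\<close>

lemma verts_DC [simp]: "verts (DC N) = {0..<N}"
  by (simp add: DC_def)

lemma arcs_DC:
  "arcs (DC N) = {(i, j). i < N \<and> j < N \<and> i \<noteq> j \<and> (j = (i + 1) mod N \<or> i = (j + 1) mod N)}"
  by (simp add: DC_def)

lemma is_digraph_DC: "is_digraph (DC N)"
  unfolding is_digraph_def by (auto simp: arcs_DC)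

lemma DC_arc_sym: "(a, b) \<in> arcs (DC N) \<Longrightarrow> (b, a) \<in> arcs (DC N)"
  unfolding arcs_DC by auto

lemma DC_arc_iff:
  assumes "3 \<le> N"
  shows "(i, j) \<in> arcs (DC N) \<longleftrightarrow> i < N \<and> j < N \<and>
           (j = i + 1 \<or> i = j + 1 \<or> (i = N - 1 \<and> j = 0) \<or> (i = 0 \<and> j = N - 1))"
proof -
  have Suc_mod: "(x + 1) mod N = (if x + 1 = N then 0 else x + 1)" if "x < N" for x
    using that by (cases "x + 1 = N") auto
  show ?thesis
  proof
    assume "(i, j) \<in> arcs (DC N)"
    then have "i < N" "j < N" "i \<noteq> j" "j = (i + 1) mod N \<or> i = (j + 1) mod N"
      unfolding arcs_DC by auto
    then show "i < N \<and> j < N \<and> (j = i + 1 \<or> i = j + 1 \<or> (i = N - 1 \<and> j = 0) \<or> (i = 0 \<and> j = N - 1))"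
      using Suc_mod[of i] Suc_mod[of j] by (auto split: if_splits)
  next
    assume "i < N \<and> j < N \<and> (j = i + 1 \<or> i = j + 1 \<or> (i = N - 1 \<and> j = 0) \<or> (i = 0 \<and> j = N - 1))"
    then show "(i, j) \<in> arcs (DC N)"
      unfolding arcs_DC using Suc_mod[of i] Suc_mod[of j] assms by auto
  qed
qed

lemma DC_arc_Suc_mod:
  assumes "2 \<le> N" "u < N"
  shows "(u, (u + 1) mod N) \<in> arcs (DC N)"
proof -
  have "(u + 1) mod N \<noteq> u"
    using assms by (cases "u + 1 = N") auto
  then show ?thesis
    using assms unfolding arcs_DC by simp
qed

lemma DC_3_eq_DK_3: "DC 3 = DK 3"
proof -
  have "j = (i + 1) mod 3 \<or> i = (j + 1) mod 3" if "i < 3" "j < 3" "i \<noteq> j" for i j :: nat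
    using that unfolding numeral_3_eq_3 less_Suc_eq by auto
  then have "{(i, j). i < 3 \<and> j < 3 \<and> i \<noteq> j \<and> (j = (i + 1) mod 3 \<or> i = (j + 1) mod 3)}
      = {(i, j). i < (3::nat) \<and> j < 3 \<and> i \<noteq> j}"
    by blast
  then show ?thesis
    unfolding DK_def DC_def by (simp only: prod.inject simp_thms)
qed

lemma acyclic_coloring_if_separates_arcs:
  assumes "\<forall>x\<in>verts G. c x < k" "separates_arcs c G"
  shows "acyclic_coloring G k c"
proof -
  have "arcs G \<inter> ({x. c x = i} \<times> {x. c x = i}) = {}" for i
    using assms(2) unfolding separates_arcs_def by auto
  then show ?thesis
    unfolding acyclic_coloring_def using assms(1) by (simp add: acyclic_def)
qed

lemma acyclic_coloring_less: "acyclic_coloring G k c \<Longrightarrow> x \<in> verts G \<Longrightarrow> c x < k"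
  unfolding acyclic_coloring_def by (elim conjE) (rule bspec)

lemma acyclic_coloring_digon:
  assumes "acyclic_coloring G k c" "(a, b) \<in> arcs G" "(b, a) \<in> arcs G"
  shows "c a \<noteq> c b"
proof
  assume same: "c a = c b"
  let ?R = "arcs G \<inter> ({x. c x = c a} \<times> {x. c x = c a})"
  have "(a, b) \<in> ?R" "(b, a) \<in> ?R"
    using assms(2,3) same by auto
  then have "(a, a) \<in> ?R\<^sup>+"
    by (meson trancl.simps)
  moreover have "acyclic ?R"
    using assms(1) unfolding acyclic_coloring_def by blast
  ultimately show False
    unfolding acyclic_def by blast
qed

lemma two_coloring_alternates:
  fixes c :: "nat \<Rightarrow> nat"
  assumes "\<And>i. i < n \<Longrightarrow> c i < 2" "\<And>i. Suc i < n \<Longrightarrow> c (Suc i) \<noteq> c i" "i < n"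
  shows "c i = (c 0 + i) mod 2"
  using assms(3)
proof (induction i)
  case (Suc i)
  have "c (Suc i) \<noteq> c i" "c i < 2" "c (Suc i) < 2"
    using Suc.prems assms(1,2) by auto
  moreover have "c i = (c 0 + i) mod 2"
    using Suc by simp
  ultimately show ?case
    by presburger
qed (use assms(1) in simp)

lemma acyclic_coloring_odd_DC_ge_3:
  assumes "odd K" "3 \<le> K" "acyclic_coloring (DC K) k c"
  shows "3 \<le> k"
proof (rule ccontr)
  assume "\<not> 3 \<le> k"
  have "c i < k" if "i < K" for i
    using acyclic_coloring_less[OF assms(3)] that by simp
  with \<open>\<not> 3 \<le> k\<close> have c2: "c i < 2" if "i < K" for i
    using that by fastforce
  have proper: "c a \<noteq> c b" if "(a, b) \<in> arcs (DC K)" for a b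
    using acyclic_coloring_digon[OF assms(3) that DC_arc_sym[OF that]] .
  have "c (Suc i) \<noteq> c i" if "Suc i < K" for i
    using proper[of i "Suc i"] that assms(2) by (simp add: DC_arc_iff)
  moreover have "K - 1 < K"
    using assms(2) by simp
  ultimately have "c (K - 1) = (c 0 + (K - 1)) mod 2"
    using c2 by (rule two_coloring_alternates[rotated])
  also have "\<dots> = c 0"
  proof -
    have "even (K - 1)"
      using assms(1,2) by simp
    then obtain j where "K - 1 = 2 * j" ..
    then show ?thesis
      using c2[of 0] assms(2) by simp
  qed
  finally show False
    using proper[of "K - 1" 0] assms(2) by (simp add: DC_arc_iff)
qed

lemma dichromatic_number_odd_DC:
  assumes "odd K" "3 \<le> K"
  shows "dichromatic_number (DC K) = 3"
  unfolding dichromatic_number_def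
proof (rule Least_equality)
  define c where "c x = (if x = K - 1 then 2 else x mod 2)" for x :: nat
  have step: "c i \<noteq> c (i + 1)" if "i + 1 < K" for i
  proof (cases "i + 1 = K - 1")
    case False
    then show ?thesis
      using that unfolding c_def by simp presburger
  qed (simp add: c_def)
  have "c (K - 1) \<noteq> c 0"
    using assms(2) by (simp add: c_def)
  then have "c a \<noteq> c b" if "(a, b) \<in> arcs (DC K)" for a b
    using that assms(2) unfolding DC_arc_iff[OF assms(2)]
    by (elim conjE disjE) (use step[of a] step[of b] in auto)
  then have "separates_arcs c (DC K)"
    unfolding separates_arcs_def by auto
  then have "acyclic_coloring (DC K) 3 c"
    by (intro acyclic_coloring_if_separates_arcs) (auto simp: c_def)
  then show "\<exists>c. acyclic_coloring (DC K) 3 c"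
    by blast
next
  fix k
  assume "\<exists>c. acyclic_coloring (DC K) k c"
  then obtain c where "acyclic_coloring (DC K) k c" ..
  then show "3 \<le> k"
    by (rule acyclic_coloring_odd_DC_ge_3[OF assms])
qed

definition rot :: "nat \<Rightarrow> nat \<Rightarrow> nat \<Rightarrow> nat" where
  "rot N k x = (x + k) mod N"

lemma rot_less: "0 < N \<Longrightarrow> rot N k x < N"
  by (simp add: rot_def)

lemma rot_rot: "rot N k (rot N l x) = rot N (l + k) x"
  by (simp add: rot_def mod_add_left_eq add.assoc)

lemma rot_cancel:
  assumes "(k + l) mod N = 0" "x < N"
  shows "rot N l (rot N k x) = x"
  using assms unfolding rot_rot unfolding rot_def
  by (metis add.right_neutral mod_add_right_eq mod_less add.commute)

lemma add_minus_mod_eq_0: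
  fixes k N :: nat
  assumes "0 < N"
  shows "(k + (N - k mod N)) mod N = 0"
proof -
  have "k mod N < N"
    using assms by simp
  then have "k + (N - k mod N) = N + N * (k div N)"
    using minus_mod_eq_mult_div[of k N] mod_less_eq_dividend[of k N] by linarith
  then show ?thesis
    by simp
qed

lemma rot_inverse:
  assumes "x < N"
  shows "rot N (N - k mod N) (rot N k x) = x" "rot N k (rot N (N - k mod N) x) = x"
  using assms add_minus_mod_eq_0[of N k] by (auto intro!: rot_cancel simp: add.commute)

lemma inj_on_rot: "inj_on (rot N k) {0..<N}"
  by (rule inj_on_inverseI[where g = "rot N (N - k mod N)"]) (simp add: rot_inverse)

lemma rot_image:
  assumes "0 < N"
  shows "rot N k ` {0..<N} = {0..<N}"
proof
  show "rot N k ` {0..<N} \<subseteq> {0..<N}"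
    using rot_less[OF assms] by auto
  show "{0..<N} \<subseteq> rot N k ` {0..<N}"
  proof
    fix x assume "x \<in> {0..<N}"
    then have "x = rot N k (rot N (N - k mod N) x)"
      by (simp add: rot_inverse)
    then show "x \<in> rot N k ` {0..<N}"
      using rot_less[OF assms] by (metis atLeastLessThan_iff image_eqI le0)
  qed
qed

lemma rot_Suc_mod: "rot N k ((i + 1) mod N) = (rot N k i + 1) mod N"
  unfolding rot_def by (simp add: mod_simps ac_simps)

lemma rot_arc:
  assumes "(a, b) \<in> arcs (DC N)"
  shows "(rot N k a, rot N k b) \<in> arcs (DC N)"
proof -
  have "a < N" "b < N" "a \<noteq> b" "b = (a + 1) mod N \<or> a = (b + 1) mod N"
    using assms unfolding arcs_DC by auto
  moreover from this have "rot N k a \<noteq> rot N k b"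
    using inj_on_rot[of N k] by (auto dest: inj_onD)
  ultimately show ?thesis
    unfolding arcs_DC using rot_less[of N k] rot_Suc_mod[of N k] by auto
qed

lemma image_rot_arcs_DC:
  "map_prod (rot N k) (rot N k) ` arcs (DC N) = arcs (DC N)"
proof
  show "map_prod (rot N k) (rot N k) ` arcs (DC N) \<subseteq> arcs (DC N)"
    using rot_arc by auto
  show "arcs (DC N) \<subseteq> map_prod (rot N k) (rot N k) ` arcs (DC N)"
  proof
    fix e assume e: "e \<in> arcs (DC N)"
    then obtain a b where "e = (a, b)" "a < N" "b < N"
      unfolding arcs_DC by auto
    let ?k' = "N - k mod N"
    have "(rot N ?k' a, rot N ?k' b) \<in> arcs (DC N)"
      using e \<open>e = (a, b)\<close> by (simp add: rot_arc)
    moreover have "e = map_prod (rot N k) (rot N k) (rot N ?k' a, rot N ?k' b)"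
      using \<open>e = (a, b)\<close> \<open>a < N\<close> \<open>b < N\<close> by (simp add: rot_inverse)
    ultimately show "e \<in> map_prod (rot N k) (rot N k) ` arcs (DC N)"
      by blast
  qed
qed

definition cycle_fold :: "nat \<Rightarrow> nat \<Rightarrow> nat" where
  "cycle_fold K i = (if i < K then i else if even (i - K) then K - 2 else K - 1)"

lemma cycle_fold_less: "3 \<le> K \<Longrightarrow> cycle_fold K i < K"
  by (simp add: cycle_fold_def)

lemma cycle_fold_Suc:
  assumes "3 \<le> K"
  shows "cycle_fold K (i + 1) = cycle_fold K i + 1 \<or> cycle_fold K i = cycle_fold K (i + 1) + 1"
proof (cases "i + 1 < K")
  case False
  show ?thesis
  proof (cases "i + 1 = K")
    case False
    with \<open>\<not> i + 1 < K\<close> have "Suc i - K = Suc (i - K)"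
      by simp
    then show ?thesis
      unfolding cycle_fold_def using False \<open>\<not> i + 1 < K\<close> assms by auto
  qed (use assms in \<open>auto simp: cycle_fold_def\<close>)
qed (simp add: cycle_fold_def)

lemma cycle_fold_arc:
  assumes "odd K" "odd M" "3 \<le> K" "K < M" "(a, b) \<in> arcs (DC M)"
  shows "(cycle_fold K a, cycle_fold K b) \<in> arcs (DC K)"
proof -
  have wrap: "cycle_fold K (M - 1) = K - 1" "cycle_fold K 0 = 0"
    using assms(1-4) by (auto simp: cycle_fold_def)
  have "a < M" "b < M" "b = a + 1 \<or> a = b + 1 \<or> (a = M - 1 \<and> b = 0) \<or> (a = 0 \<and> b = M - 1)"
    using assms(3-5) by (auto simp: DC_arc_iff)
  then show ?thesis
    using cycle_fold_Suc[OF assms(3), of a] cycle_fold_Suc[OF assms(3), of b]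
      cycle_fold_less[OF assms(3)] wrap assms(3) by (auto simp: DC_arc_iff)
qed

lemma image_cycle_fold_atLeastLessThan:
  assumes "3 \<le> K" "K \<le> M"
  shows "cycle_fold K ` {0..<M} = {0..<K}"
proof
  show "cycle_fold K ` {0..<M} \<subseteq> {0..<K}"
    using cycle_fold_less[OF assms(1)] by auto
  show "{0..<K} \<subseteq> cycle_fold K ` {0..<M}"
  proof
    fix x assume "x \<in> {0..<K}"
    then have "x = cycle_fold K x" "x \<in> {0..<M}"
      using assms(2) by (auto simp: cycle_fold_def)
    then show "x \<in> cycle_fold K ` {0..<M}"
      by (rule image_eqI)
  qed
qed

lemma arcs_DC_subset_image_cycle_fold:
  assumes "odd K" "odd M" "3 \<le> K" "K < M"
  shows "arcs (DC K) \<subseteq> map_prod (cycle_fold K) (cycle_fold K) ` arcs (DC M)"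
proof
  have id: "cycle_fold K i = i" if "i < K" for i
    using that by (simp add: cycle_fold_def)
  have wrap: "cycle_fold K (M - 1) = K - 1" "cycle_fold K 0 = 0"
    using assms by (auto simp: cycle_fold_def)
  have M3: "3 \<le> M"
    using assms(3,4) by simp
  fix e assume "e \<in> arcs (DC K)"
  then obtain x y where e: "e = (x, y)" "x < K" "y < K"
    "y = x + 1 \<or> x = y + 1 \<or> (x = K - 1 \<and> y = 0) \<or> (x = 0 \<and> y = K - 1)"
    using assms(3) by (cases e) (auto simp: DC_arc_iff)
  from e(4) obtain x' y' where "(x', y') \<in> arcs (DC M)" "cycle_fold K x' = x" "cycle_fold K y' = y"
  proof (elim disjE conjE)
    assume "x = K - 1" "y = 0"
    then show ?thesis
      using that[of "M - 1" 0] wrap M3 by (simp add: DC_arc_iff)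
  next
    assume "x = 0" "y = K - 1"
    then show ?thesis
      using that[of 0 "M - 1"] wrap M3 by (simp add: DC_arc_iff)
  qed (use that[of x y] e(2,3) id assms(4) M3 in \<open>auto simp: DC_arc_iff\<close>)
  then show "e \<in> map_prod (cycle_fold K) (cycle_fold K) ` arcs (DC M)"
    using e(1) by force
qed

lemma image_cycle_fold_DC:
  assumes "odd K" "odd M" "3 \<le> K" "K < M"
  shows "image_digraph (cycle_fold K) (DC M) = DC K"
proof -
  have "map_prod (cycle_fold K) (cycle_fold K) ` arcs (DC M) = arcs (DC K)"
    using cycle_fold_arc[OF assms] arcs_DC_subset_image_cycle_fold[OF assms] by auto
  then show ?thesis
    unfolding image_digraph_def using image_cycle_fold_atLeastLessThan[of K M] assms(3,4)
    by (simp add: DC_def)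
qed

lemma collisions_cycle_fold: "collisions (cycle_fold K) V \<subseteq> {K - 2, K - 1}"
proof
  fix y assume "y \<in> collisions (cycle_fold K) V"
  then obtain x1 x2 where "x1 \<noteq> x2" "cycle_fold K x1 = y" "cycle_fold K x2 = y"
    unfolding collisions_def by blast
  then show "y \<in> {K - 2, K - 1}"
    unfolding cycle_fold_def by (auto split: if_splits)
qed

text \<open>The surplus vertices of the longer cycle are folded back and forth onto the last arc of
  the shorter one, so only the fibres of \<open>K - 2\<close> and \<open>K - 1\<close> need identifications.\<close>
lemma obtainable_within_shorter_odd_cycle:
  assumes "hajos_construction r Ds" "DC M \<in> available r (set Ds)"
    and "odd K" "odd M" "3 \<le> K" "K < M"
  shows "obtainable_within r Ds 2 (DC K)"
proof -
  have "separates_arcs (cycle_fold K) (DC M)"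
    using image_cycle_fold_DC[OF assms(3-6)] is_digraph_DC
    by (metis separates_arcs_if_is_digraph_image)
  then have "obtainable_within r Ds (card (collisions (cycle_fold K) (verts (DC M)))) (DC K)"
    using obtainable_within_image_digraph[OF assms(1,2)] image_cycle_fold_DC[OF assms(3-6)] by metis
  moreover have "card (collisions (cycle_fold K) (verts (DC M))) \<le> card {K - 2, K - 1}"
    by (rule card_mono[OF _ collisions_cycle_fold]) simp
  moreover have "card {K - 2, K - 1} \<le> 2"
    by (simp add: card_insert_if)
  ultimately show ?thesis
    using obtainable_within_mono by (meson order_trans)
qed

section \<open>Chorded cycles\<close>

definition chord :: "nat \<Rightarrow> nat \<Rightarrow> nat \<Rightarrow> nat \<times> nat" where
  "chord N p u = (u, (u + p) mod N)"

text \<open>The intermediate digraphs of the doubling step; with \<open>N = 2 p - 1\<close> a chord jumps half way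
  round the cycle.\<close>
definition chorded_cycle :: "nat \<Rightarrow> nat \<Rightarrow> (nat \<times> nat) set \<Rightarrow> nat set \<Rightarrow> digraph" where
  "chorded_cycle N p M T = ({0..<N}, (arcs (DC N) - M) \<union> chord N p ` T)"

lemma chord_inject: "chord N p x = chord N p y \<longleftrightarrow> x = y"
  by (auto simp: chord_def)

lemma rot_chord: "map_prod (rot N k) (rot N k) (chord N p u) = chord N p (rot N k u)"
  unfolding chord_def rot_def by (simp add: mod_simps ac_simps)

lemma chord_eq_rot: "u < N \<Longrightarrow> chord N p u = map_prod (rot N u) (rot N u) (0, p)"
  unfolding chord_def rot_def by (simp add: add.commute)

lemma image_rot_chorded_cycle:
  assumes "0 < N" "M \<subseteq> arcs (DC N)" "T \<subseteq> {0..<N}"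
  shows "image_digraph (rot N k) (chorded_cycle N p M T)
           = chorded_cycle N p (map_prod (rot N k) (rot N k) ` M) (rot N k ` T)"
proof -
  have arcs_sub: "arcs (DC N) \<subseteq> {0..<N} \<times> {0..<N}"
    by (auto simp: arcs_DC)
  have "map_prod (rot N k) (rot N k) ` (arcs (DC N) - M)
      = map_prod (rot N k) (rot N k) ` arcs (DC N) - map_prod (rot N k) (rot N k) ` M"
    by (rule inj_on_image_set_diff[OF map_prod_inj_on[OF inj_on_rot inj_on_rot]])
      (use assms(2) arcs_sub in auto)
  then have "map_prod (rot N k) (rot N k) ` (arcs (DC N) - M)
      = arcs (DC N) - map_prod (rot N k) (rot N k) ` M"
    by (simp add: image_rot_arcs_DC)
  moreover have "map_prod (rot N k) (rot N k) ` chord N p ` T = chord N p ` rot N k ` T"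
    by (simp add: image_comp comp_def rot_chord)
  ultimately show ?thesis
    unfolding chorded_cycle_def image_digraph_def using rot_image[OF assms(1)]
    by (simp add: image_Un)
qed

context
  fixes N p :: nat
  assumes N_eq: "N = 2 * p - 1" and p_ge: "3 \<le> p"
begin

lemma chord_chord: "((u + p) mod N + p) mod N = (u + 1) mod N"
proof -
  have "u + p + p = (u + 1) + N"
    using N_eq p_ge by simp
  then have "(u + p + p) mod N = (u + 1) mod N"
    by (metis mod_add_self2)
  then show ?thesis
    by (simp add: mod_add_left_eq)
qed

text \<open>Rotating the chord at \<open>u\<close> to the chord \<open>(0, p)\<close> reduces this to \<open>1 < p < N - 1\<close>.\<close>
lemma chord_not_arc:
  assumes "u < N"
  shows "chord N p u \<notin> arcs (DC N)"
proof -
  have "p < N" "3 \<le> N"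
    using N_eq p_ge by simp_all
  then have "(0, p) \<notin> arcs (DC N)"
    using N_eq p_ge by (simp add: DC_arc_iff)
  moreover have "map_prod (rot N (N - u mod N)) (rot N (N - u mod N)) (chord N p u) = (0, p)"
    using chord_eq_rot[OF assms] rot_inverse(1) \<open>p < N\<close> by simp
  ultimately show ?thesis
    by (metis map_prod_simp prod.collapse rot_arc)
qed

lemma arcs_merge_chords:
  assumes "T1 \<subseteq> {0..<N}" "T2 \<subseteq> {0..<N}" "u \<in> T1" "v \<in> T2" "M1 \<inter> M2 = {}"
  shows "((arcs (DC N) - M1) \<union> chord N p ` T1 - {chord N p u})
       \<union> ((arcs (DC N) - M2) \<union> chord N p ` T2 - {chord N p v})
       \<union> {(u, (u + 1) mod N)}
     = arcs (DC N) \<union> chord N p ` ((T1 - {u}) \<union> (T2 - {v}))"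
proof -
  have chords: "chord N p x \<notin> arcs (DC N)" if "x \<in> T1 \<union> T2" for x
    using that assms(1,2) chord_not_arc by auto
  then have "chord N p u \<notin> arcs (DC N)" "chord N p v \<notin> arcs (DC N)"
    using assms(3,4) by auto
  moreover have "(u, (u + 1) mod N) \<in> arcs (DC N)"
    using assms(1,3) N_eq p_ge by (intro DC_arc_Suc_mod) auto
  ultimately show ?thesis
    using assms(5) chords by (auto simp: chord_inject)
qed

text \<open>Joining along the chord at \<open>u\<close> and a rotated copy of the chord at \<open>v\<close> replaces both
  chords by the cycle arc from \<open>u\<close> to \<open>u + 1\<close>; folding the rotated copy back onto the cycle
  costs at most \<open>N - 1\<close> identifications.\<close>
lemma obtainable_within_merge_chords:
  assumes cons: "hajos_construction r Ds"
    and S1: "chorded_cycle N p M1 T1 \<in> available r (set Ds)"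
    and S2: "chorded_cycle N p M2 T2 \<in> available r (set Ds)"
    and M: "M2 \<subseteq> arcs (DC N)" and T: "T1 \<subseteq> {0..<N}" "T2 \<subseteq> {0..<N}"
    and uv: "u \<in> T1" "v \<in> T2" and glue: "rot N k v = (u + p) mod N"
    and disj: "M1 \<inter> map_prod (rot N k) (rot N k) ` M2 = {}"
  shows "obtainable_within r Ds N (chorded_cycle N p {} ((T1 - {u}) \<union> (rot N k ` T2 - {rot N k v})))"
proof -
  have N0: "0 < N"
    using N_eq p_ge by simp
  let ?M2 = "map_prod (rot N k) (rot N k) ` M2" and ?T2 = "rot N k ` T2" and ?v = "rot N k v"
  have S2': "chorded_cycle N p ?M2 ?T2 \<in> available r (set Ds)"
    using available_image_digraph[OF S2, of "rot N k"] image_rot_chorded_cycle[OF N0 M T(2)]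
    by (simp add: chorded_cycle_def inj_on_rot)
  have T2': "?T2 \<subseteq> {0..<N}" "?v \<in> ?T2"
    using rot_image[OF N0, of k] T(2) uv(2) by auto
  have arc1: "(u, (u + p) mod N) \<in> arcs (chorded_cycle N p M1 T1)"
    using uv(1) by (simp add: chorded_cycle_def chord_def)
  have arc2: "(?v, (?v + p) mod N) \<in> arcs (chorded_cycle N p ?M2 ?T2)"
    using T2'(2) by (simp add: chorded_cycle_def chord_def)
  have head: "(?v + p) mod N = (u + 1) mod N"
    using glue chord_chord by simp
  have "(u, (u + 1) mod N) \<in> arcs (DC N)"
    using N_eq p_ge T(1) uv(1) by (intro DC_arc_Suc_mod) auto
  then have "u \<noteq> (u + 1) mod N"
    by (rule is_digraphD(3)[OF is_digraph_DC])
  with head have "id u \<noteq> id ((?v + p) mod N)"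
    by simp
  from obtainable_within_join_images[OF cons S1 S2' inj_on_id inj_on_id arc1 arc2 _ this]
  have "obtainable_within r Ds (1 + card ({0..<N} \<inter> ({0..<N} - {?v})))
     ({0..<N}, ((arcs (DC N) - M1) \<union> chord N p ` T1 - {chord N p u})
       \<union> ((arcs (DC N) - ?M2) \<union> chord N p ` ?T2 - {chord N p ?v})
       \<union> {(u, (u + 1) mod N)})"
    using glue head by (simp add: chorded_cycle_def chord_def)
  moreover have "{0..<N} \<inter> ({0..<N} - {?v}) = {0..<N} - {?v}" "?v \<in> {0..<N}"
    using T2' by auto
  then have "1 + card ({0..<N} \<inter> ({0..<N} - {?v})) = N"
    using N0 by simp
  ultimately show ?thesis
    unfolding chorded_cycle_def
    using arcs_merge_chords[OF T(1) T2'(1) uv(1) T2'(2) disj] by simp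
qed


lemma chord_0_p: "chord N p 0 = (0, p)" "chord N p p = (p, 1)"
proof -
  have "p mod N = p" "1 mod N = 1"
    using N_eq p_ge by simp_all
  then show "chord N p 0 = (0, p)" "chord N p p = (p, 1)"
    using chord_chord[of 0] by (simp_all add: chord_def)
qed

lemma join_cycles_arcs_subset:
  assumes g_def: "\<And>i. g i = (if i = p - 1 then 0 else p + i)"
  shows "map_prod Suc Suc ` (arcs (DC p) - {(0, p - 1)}) \<union> map_prod g g ` (arcs (DC p) - {(0, p - 1)})
      \<union> {(1, 0)} \<subseteq> arcs (DC N) - {(0, 1)} \<union> chord N p ` {0, p}"
    (is "_ \<subseteq> ?R")
proof -
  have p3: "3 \<le> p" and N3: "3 \<le> N" and pN: "p < N" and Np: "N - 1 = p + (p - 2)"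
    using N_eq p_ge by simp_all
  have "map_prod Suc Suc ` (arcs (DC p) - {(0, p - 1)}) \<subseteq> ?R"
    using p3 pN Np by (auto simp: DC_arc_iff[OF p3] DC_arc_iff[OF N3] chord_0_p)
  moreover have "map_prod g g ` (arcs (DC p) - {(0, p - 1)}) \<subseteq> ?R"
  proof (rule image_subsetI)
    fix e assume "e \<in> arcs (DC p) - {(0, p - 1)}"
    then obtain x y where e: "e = (x, y)" "x < p" "y < p"
      and "y = x + 1 \<or> x = y + 1 \<or> (x = p - 1 \<and> y = 0)"
      using p3 by (cases e) (auto simp: DC_arc_iff[OF p3])
    then show "map_prod g g e \<in> ?R"
      using p3 pN Np
      by (cases "x = p - 1"; cases "y = p - 1") (auto simp: DC_arc_iff[OF N3] chord_0_p g_def)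
  qed
  moreover have "(1, 0) \<in> ?R"
    using N3 by (simp add: DC_arc_iff[OF N3])
  ultimately show ?thesis
    by (intro Un_least) simp_all
qed

lemma join_cycles_arcs_supset:
  assumes g_def: "\<And>i. g i = (if i = p - 1 then 0 else p + i)"
  shows "arcs (DC N) - {(0, 1)} \<union> chord N p ` {0, p} \<subseteq>
      map_prod Suc Suc ` (arcs (DC p) - {(0, p - 1)}) \<union> map_prod g g ` (arcs (DC p) - {(0, p - 1)})
      \<union> {(1, 0)}"
proof
  define h where "h x = (if x = 0 then p - 1 else x - p)" for x
  have p3: "3 \<le> p" and N3: "3 \<le> N" and pN: "p < N" and Np: "N - 1 = p + (p - 2)"
    using N_eq p_ge by simp_all
  have sub: "arcs (DC p) - {(0, p - 1)} \<subseteq> {0..<p} \<times> {0..<p}"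
    by (auto simp: arcs_DC)
  have Suc_mem: "(a, b) \<in> map_prod Suc Suc ` (arcs (DC p) - {(0, p - 1)}) \<longleftrightarrow>
      (a - 1, b - 1) \<in> arcs (DC p) - {(0, p - 1)} \<and> 0 < a \<and> 0 < b" for a b
    by (subst mem_image_map_prod_iff[OF _ sub, of "\<lambda>x. x - 1"]) auto
  have g_mem: "(a, b) \<in> map_prod g g ` (arcs (DC p) - {(0, p - 1)}) \<longleftrightarrow>
      (h a, h b) \<in> arcs (DC p) - {(0, p - 1)} \<and> g (h a) = a \<and> g (h b) = b" for a b
    by (rule mem_image_map_prod_iff[OF _ sub]) (auto simp: g_def h_def)
  fix e assume "e \<in> arcs (DC N) - {(0, 1)} \<union> chord N p ` {0, p}"
  then obtain a b where e: "e = (a, b)" and "(a, b) \<in> arcs (DC N) - {(0, 1)} \<union> chord N p ` {0, p}"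
    by (cases e) auto
  then consider (fwd) "b = a + 1" "0 < a" "b < N" | (bwd) "a = b + 1" "a < N"
    | "a = N - 1" "b = 0" | "a = 0" "b = N - 1" | "a = 0" "b = p" | "a = p" "b = 1"
    by (auto simp: DC_arc_iff[OF N3] chord_0_p)
  then have "(a, b) \<in> map_prod Suc Suc ` (arcs (DC p) - {(0, p - 1)})
      \<union> map_prod g g ` (arcs (DC p) - {(0, p - 1)}) \<union> {(1, 0)}"
  proof cases
    case fwd
    then show ?thesis
      unfolding Un_iff Suc_mem g_mem using p3 pN Np
      by (cases "a < p") (auto simp: DC_arc_iff[OF p3] g_def h_def Suc_diff_le)
  next
    case bwd
    then show ?thesis
      unfolding Un_iff Suc_mem g_mem using p3 pN Np
      by (cases "b < p") (auto simp: DC_arc_iff[OF p3] g_def h_def Suc_diff_le)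
  qed (unfold Un_iff Suc_mem g_mem, use p3 pN Np in \<open>auto simp: DC_arc_iff[OF p3] g_def h_def\<close>)
  then show "e \<in> map_prod Suc Suc ` (arcs (DC p) - {(0, p - 1)})
      \<union> map_prod g g ` (arcs (DC p) - {(0, p - 1)}) \<union> {(1, 0)}"
    using e by simp
qed

lemma join_cycles_verts:
  assumes g_def: "\<And>i. g i = (if i = p - 1 then 0 else p + i)"
  shows "Suc ` verts (DC p) \<union> g ` verts (DC p) = {0..<N}"
proof
  show "Suc ` verts (DC p) \<union> g ` verts (DC p) \<subseteq> {0..<N}"
    using N_eq p_ge unfolding g_def by auto
  show "{0..<N} \<subseteq> Suc ` verts (DC p) \<union> g ` verts (DC p)"
  proof
    fix x assume x: "x \<in> {0..<N}"
    consider "x = 0" | "0 < x" "x \<le> p" | "p < x"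
      by linarith
    then show "x \<in> Suc ` verts (DC p) \<union> g ` verts (DC p)"
    proof cases
      case 1
      then have "x = g (p - 1)"
        by (simp add: g_def)
      then show ?thesis
        using p_ge by auto
    next
      case 2
      then have "x = Suc (x - 1)" "x - 1 \<in> verts (DC p)"
        by auto
      then show ?thesis
        by (metis UnI1 image_eqI)
    next
      case 3
      then have "x = g (x - p)" "x - p < p"
        using x N_eq unfolding g_def by auto
      then show ?thesis
        by (metis UnI2 atLeastLessThan_iff image_eqI le0 verts_DC)
    qed
  qed
qed

text \<open>The two copies of \<open>D(C\<^sub>p)\<close> are placed on \<open>1, \<dots>, p\<close> and on \<open>p, \<dots>, 2 p - 2, 0\<close>.\<close>
lemma obtainable_within_join_cycles:
  assumes cons: "hajos_construction r Ds" and C: "DC p \<in> available r (set Ds)"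
  shows "obtainable_within r Ds 1 (chorded_cycle N p {(0, 1)} {0, p})"
proof -
  define g where "g i = (if i = p - 1 then 0 else p + i)" for i
  have arc: "(0, p - 1) \<in> arcs (DC p)"
    using p_ge by (simp add: DC_arc_iff)
  have inj: "inj_on Suc (verts (DC p))" "inj_on g (verts (DC p))"
    unfolding g_def inj_on_def by auto
  have glue: "g 0 = Suc (p - 1)" and g_last: "g (p - 1) = 0"
    using p_ge by (simp_all add: g_def)
  have "Suc 0 \<noteq> g (p - 1)"
    using g_last by simp
  note join = obtainable_within_join_images[OF cons C C inj arc arc glue this]
  have disj: "Suc ` verts (DC p) \<inter> g ` (verts (DC p) - {0}) = {}"
    unfolding g_def by auto
  have new_arc: "(Suc 0, g (p - 1)) = (1, 0)"
    using g_last by simp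
  have arcs_eq: "map_prod Suc Suc ` (arcs (DC p) - {(0, p - 1)})
      \<union> map_prod g g ` (arcs (DC p) - {(0, p - 1)}) \<union> {(Suc 0, g (p - 1))}
      = arcs (DC N) - {(0, 1)} \<union> chord N p ` {0, p}"
    unfolding new_arc
    by (rule equalityI[OF join_cycles_arcs_subset[OF g_def] join_cycles_arcs_supset[OF g_def]])
  show ?thesis
    using join unfolding disj arcs_eq join_cycles_verts[OF g_def] chorded_cycle_def by simp
qed

lemma obtainable_within_double_chord_gap:
  assumes cons: "hajos_construction r Ds"
    and S: "chorded_cycle N p M {0, c} \<in> available r (set Ds)"
    and M: "M \<subseteq> arcs (DC N)" and c: "0 < c" "c < N"
    and disj: "M \<inter> map_prod (rot N ((c + p) mod N)) (rot N ((c + p) mod N)) ` M = {}"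
  shows "obtainable_within r Ds N (chorded_cycle N p {} {0, (2 * c + p) mod N})"
proof -
  let ?k = "(c + p) mod N"
  have "rot N ?k 0 = ?k" "rot N ?k c = (2 * c + p) mod N"
    by (simp_all add: rot_def mod_add_right_eq mult_2 add.assoc)
  moreover have "?k \<noteq> (2 * c + p) mod N"
  proof
    assume "?k = (2 * c + p) mod N"
    then have "rot N ?k 0 = rot N ?k c"
      using calculation by simp
    then show False
      using inj_on_rot[of N ?k] c by (auto dest: inj_onD)
  qed
  ultimately have "({0, c} - {c}) \<union> (rot N ?k ` {0, c} - {rot N ?k 0}) = {0, (2 * c + p) mod N}"
    using c by auto
  moreover have "obtainable_within r Ds N
      (chorded_cycle N p {} (({0, c} - {c}) \<union> (rot N ?k ` {0, c} - {rot N ?k 0})))"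
    by (rule obtainable_within_merge_chords[OF cons S S M]) (use c disj in \<open>auto simp: rot_def\<close>)
  ultimately show ?thesis
    by simp
qed

end

context
  fixes n N p :: nat
  assumes n_ge: "1 \<le> n" and N_def: "N = 2 ^ (n + 1) + 1" and p_def: "p = 2 ^ n + 1"
begin

lemma doubling_N_p: "N = 2 * p - 1" "3 \<le> p"
proof -
  have "(2::nat) \<le> 2 ^ n"
    using n_ge by (simp add: self_le_power)
  then show "N = 2 * p - 1" "3 \<le> p"
    unfolding N_def p_def by simp_all
qed

text \<open>The first merge also restores the arc \<open>(0, 1)\<close>, which the rotated copy still has.\<close>
lemma obtainable_within_chord_gaps:
  assumes cons: "hajos_construction r Ds"
    and R: "chorded_cycle N p {(0, 1)} {0, p} \<in> available r (set Ds)" and "j \<le> n"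
  shows "obtainable_within r Ds (j * N)
           (chorded_cycle N p (if j = 0 then {(0, 1)} else {}) {0, 2 ^ j + 2 ^ n})"
  using \<open>j \<le> n\<close>
proof (induction j)
  case 0
  then show ?case
    using obtainable_within_available[OF cons R] p_def by simp
next
  case (Suc j)
  let ?M = "if j = 0 then {(0::nat, 1::nat)} else {}"
  have "obtainable_within r Ds (j * N + N)
      (chorded_cycle N p {} {0, 2 ^ Suc j + 2 ^ n})"
  proof (rule obtainable_within_bind[OF Suc.IH[OF Suc_leD[OF Suc.prems]]])
    fix Es
    assume Es: "hajos_construction r (Ds @ Es)"
      "chorded_cycle N p ?M {0, 2 ^ j + 2 ^ n} \<in> available r (set (Ds @ Es))"
    have "(2::nat) ^ Suc j \<le> 2 ^ n"
      using Suc.prems by (intro power_increasing) auto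
    then have c: "0 < (2::nat) ^ j + 2 ^ n" "2 ^ j + 2 ^ n < N" "2 ^ Suc j + 2 ^ n < N" "2 ^ j < N"
      unfolding N_def by simp_all
    have eqs: "2 ^ j + 2 ^ n + p = 2 ^ j + N" "2 * (2 ^ j + 2 ^ n) + p = (2 ^ Suc j + 2 ^ n) + N"
      unfolding N_def p_def by simp_all
    have "(2 ^ j + 2 ^ n + p) mod N = 2 ^ j"
      unfolding eqs(1) using c(4) by simp
    moreover have "(2 * (2 ^ j + 2 ^ n) + p) mod N = 2 ^ Suc j + 2 ^ n"
      unfolding eqs(2) using c(3) by (simp only: mod_add_self2 mod_less)
    moreover have "3 \<le> N"
      using doubling_N_p by simp
    then have "?M \<inter> map_prod (rot N (2 ^ j)) (rot N (2 ^ j)) ` ?M = {}" "?M \<subseteq> arcs (DC N)"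
      by (simp_all add: rot_def DC_arc_iff)
    ultimately show "obtainable_within r (Ds @ Es) N (chorded_cycle N p {} {0, 2 ^ Suc j + 2 ^ n})"
      using obtainable_within_double_chord_gap[OF doubling_N_p Es(1,2) _ c(1,2)] by simp
  qed
  then show ?case
    by (simp add: add.commute)
qed

lemma obtainable_within_remove_chords:
  assumes cons: "hajos_construction r Ds"
    and R: "chorded_cycle N p {(0, 1)} {0, p} \<in> available r (set Ds)"
    and S: "chorded_cycle N p {} {0, N - 1} \<in> available r (set Ds)"
  shows "obtainable_within r Ds (N + N) (DC N)"
proof -
  note N_p = doubling_N_p
  have N3: "3 \<le> N" "p < N"
    using N_p by simp_all
  have e: "N - 1 + p = (p - 1) + N" "p + (p - 1) = N"
    using N_p by simp_all
  have shifts: "rot N (p - 1) 0 = (N - 1 + p) mod N" "rot N (p - 1) p = 0"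
    unfolding rot_def e using N3 by simp_all
  then have "obtainable_within r Ds N
      (chorded_cycle N p {} (({0, N - 1} - {N - 1}) \<union> (rot N (p - 1) ` {0, p} - {rot N (p - 1) 0})))"
    using N3 by (intro obtainable_within_merge_chords[OF N_p cons S R]) (auto simp: DC_arc_iff)
  moreover have "({0, N - 1} - {N - 1}) \<union> (rot N (p - 1) ` {0, p} - {rot N (p - 1) 0}) = {0}"
    using shifts N3 e(1) by auto
  ultimately have "obtainable_within r Ds N (chorded_cycle N p {} {0})"
    by simp
  then have "obtainable_within r Ds (N + N) (chorded_cycle N p {} {})"
  proof (rule obtainable_within_bind)
    fix Es
    assume Es: "hajos_construction r (Ds @ Es)" "chorded_cycle N p {} {0} \<in> available r (set (Ds @ Es))"
    have "rot N p 0 = (0 + p) mod N"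
      by (simp add: rot_def)
    from obtainable_within_merge_chords[OF N_p Es(1) Es(2) Es(2) _ _ _ _ _ this]
    show "obtainable_within r (Ds @ Es) N (chorded_cycle N p {} {})"
      using N3 by simp
  qed
  moreover have "chorded_cycle N p {} {} = DC N"
    by (simp add: chorded_cycle_def DC_def)
  ultimately show ?thesis
    by simp
qed

lemma obtainable_within_double_cycle:
  assumes cons: "hajos_construction r Ds" and C: "DC p \<in> available r (set Ds)"
  shows "obtainable_within r Ds (1 + (n + 2) * N) (DC N)"
proof -
  have "obtainable_within r Ds (1 + (n * N + (N + N))) (DC N)"
  proof (rule obtainable_within_bind[OF obtainable_within_join_cycles[OF doubling_N_p cons C]])
    fix Es
    assume Es: "hajos_construction r (Ds @ Es)"
      "chorded_cycle N p {(0, 1)} {0, p} \<in> available r (set (Ds @ Es))"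
    have "2 ^ n + 2 ^ n = N - 1"
      unfolding N_def by simp
    then have "obtainable_within r (Ds @ Es) (n * N) (chorded_cycle N p {} {0, N - 1})"
      using obtainable_within_chord_gaps[OF Es order_refl] n_ge by simp
    then show "obtainable_within r (Ds @ Es) (n * N + (N + N)) (DC N)"
    proof (rule obtainable_within_bind)
      fix Fs
      assume Fs: "hajos_construction r ((Ds @ Es) @ Fs)"
        "chorded_cycle N p {} {0, N - 1} \<in> available r (set ((Ds @ Es) @ Fs))"
      have "chorded_cycle N p {(0, 1)} {0, p} \<in> available r (set ((Ds @ Es) @ Fs))"
        using Es(2) by (rule available_mono) auto
      then show "obtainable_within r ((Ds @ Es) @ Fs) (N + N) (DC N)"
        using obtainable_within_remove_chords[OF Fs(1) _ Fs(2)] by blast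
    qed
  qed
  then show ?thesis
    by (simp add: algebra_simps)
qed

end

definition doubling_cost :: "nat \<Rightarrow> nat" where
  "doubling_cost n = (\<Sum>i = 1..<n. (i + 2) * (2 ^ (i + 1) + 1) + 1)"

lemma doubling_cost_eq:
  assumes "1 \<le> n"
  shows "real (doubling_cost n) = real n * (2 ^ (n + 2) + real n + 5) / 2 - 7"
  unfolding doubling_cost_def using assms
proof (induction n rule: nat_induct_at_least)
  case (Suc n)
  then show ?case
    by (simp add: field_simps power_add; simp add: algebra_simps)
qed simp

lemma obtainable_within_DC_two_power:
  assumes "1 \<le> n"
  shows "obtainable_within 3 [] (doubling_cost n) (DC (2 ^ n + 1))"
  using assms
proof (induction n rule: nat_induct_at_least)
  case base
  have "DC 3 \<in> available 3 (set [])"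
    unfolding available_def DC_3_eq_DK_3[symmetric] using is_digraph_DC digraph_iso_refl by simp
  then have "obtainable_within 3 [] 0 (DC 3)"
    by (intro obtainable_within_available) (simp_all add: hajos_construction_def)
  then show ?case
    by (simp add: doubling_cost_def)
next
  case (Suc n)
  have "obtainable_within 3 [] (doubling_cost n + (1 + (n + 2) * (2 ^ (n + 1) + 1)))
      (DC (2 ^ (n + 1) + 1))"
    using Suc.IH by (rule obtainable_within_bind)
      (use Suc.hyps obtainable_within_double_cycle[OF _ refl refl] in simp)
  then show ?case
    using Suc.hyps by (simp add: doubling_cost_def ac_simps)
qed

lemma hajos_number_r_le:
  assumes "obtainable_within r [] k H"
  shows "hajos_number_r r H \<le> k"
proof -
  let ?P = "\<lambda>k. (k = 0 \<and> digraph_iso H (DK r)) \<or>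
      (\<exists>Ds. hajos_construction r Ds \<and> Ds \<noteq> [] \<and> length Ds = k \<and> digraph_iso (last Ds) H)"
  obtain Es where Es: "hajos_construction r Es" "length Es \<le> k" "H \<in> available r (set Es)"
    using assms unfolding obtainable_within_def by auto
  from Es(3) consider "digraph_iso H (DK r)" | G where "G \<in> set Es" "digraph_iso H G"
    unfolding available_def by blast
  then have "\<exists>i \<le> length Es. ?P i"
  proof cases
    case (2 G)
    then obtain i where i: "i < length Es" "Es ! i = G"
      by (meson in_set_conv_nth)
    then have "?P (Suc i)"
      using hajos_construction_take[OF Es(1), of "Suc i"] digraph_iso_sym[OF 2(2)]
      by (intro disjI2 exI[of _ "take (Suc i) Es"]) (auto simp: take_Suc_conv_app_nth)
    then show ?thesis
      using i(1) by (intro exI[of _ "Suc i"]) simp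
  qed auto
  then obtain i where "i \<le> length Es" "?P i"
    by blast
  moreover from \<open>?P i\<close> have "(LEAST k. ?P k) \<le> i"
    by (rule Least_le)
  ultimately have "(LEAST k. ?P k) \<le> k"
    using Es(2) by linarith
  then show ?thesis
    unfolding hajos_number_r_def .
qed

lemma hajos_number_odd_DC_le:
  assumes "odd K" "3 \<le> K" "obtainable_within 3 [] k (DC K)"
  shows "hajos_number (DC K) \<le> k"
  unfolding hajos_number_def dichromatic_number_odd_DC[OF assms(1,2)]
  using assms(3) by (rule hajos_number_r_le)

lemma hajos_number_DC_two_power_le:
  assumes "1 \<le> n"
  shows "hajos_number (DC (2 ^ n + 1)) \<le> doubling_cost n"
proof (rule hajos_number_odd_DC_le)
  show "3 \<le> (2::nat) ^ n + 1"
    using assms by (simp add: self_le_power)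
qed (use assms obtainable_within_DC_two_power in simp_all)

lemma hajos_number_shorter_odd_DC_le:
  assumes "odd K" "2 ^ (n - 1) + 1 < K" "K < 2 ^ n + 1" "2 \<le> n"
  shows "hajos_number (DC K) \<le> doubling_cost n + 2"
proof (rule hajos_number_odd_DC_le)
  have "(2::nat) \<le> 2 ^ (n - 1)"
    using assms(4) by (simp add: self_le_power)
  then show "3 \<le> K"
    using assms(2) by linarith
  have "obtainable_within 3 [] (doubling_cost n) (DC (2 ^ n + 1))"
    using assms(4) by (intro obtainable_within_DC_two_power) simp
  then show "obtainable_within 3 [] (doubling_cost n + 2) (DC K)"
  proof (rule obtainable_within_bind)
    fix Es
    assume "hajos_construction 3 ([] @ Es)" "DC (2 ^ n + 1) \<in> available 3 (set ([] @ Es))"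
    then show "obtainable_within 3 ([] @ Es) 2 (DC K)"
      using obtainable_within_shorter_odd_cycle assms \<open>3 \<le> K\<close> by simp
  qed
qed (rule assms(1))

theorem theorem2:
  fixes n :: nat
  assumes "n \<ge> 2"
  shows "real (hajos_number (DC (2 ^ n + 1)))
           \<le> real n * (2 ^ (n + 2) + real n + 5) / 2 - 7
         \<and> (\<forall>m::nat. 2 ^ (n - 1) + 1 < 2 * m + 1 \<and> 2 * m + 1 < 2 ^ n + 1 \<longrightarrow>
           real (hajos_number (DC (2 * m + 1)))
             \<le> real n * (2 ^ (n + 2) + real n + 5) / 2 - 5)"
proof -
  have n: "1 \<le> n"
    using assms by simp
  have "real (hajos_number (DC (2 ^ n + 1))) \<le> real (doubling_cost n)"
    using hajos_number_DC_two_power_le[OF n] by simp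
  moreover have "real (hajos_number (DC (2 * m + 1))) \<le> real (doubling_cost n) + 2"
    if "2 ^ (n - 1) + 1 < 2 * m + 1" "2 * m + 1 < 2 ^ n + 1" for m
  proof -
    have "hajos_number (DC (2 * m + 1)) \<le> doubling_cost n + 2"
      using that assms by (intro hajos_number_shorter_odd_DC_le) simp_all
    then have "real (hajos_number (DC (2 * m + 1))) \<le> real (doubling_cost n + 2)"
      by (rule of_nat_mono)
    then show ?thesis
      by simp
  qed
  ultimately show ?thesis
    using doubling_cost_eq[OF n] by auto
qed

end
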